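(* Let $n\ge 3$, let $q_1,\dots,q_n,r_1,\dots,r_n$ be positive integers, and let $H$ be a finite simple graph without a universal vertex. Then $${\rm dim}_s\big(K_{n,n}^{-M}(q_1,\dots,q_n,r_1,\dots,r_n)\diamond H\big)=\sum_{i=1}^{n}\Big((q_i+r_i)\sum_{j=1}^{k(H)}t_j(H)\Big)-n\,k(H).$$
   Context: The modular product $G\diamond H$ has vertex set $V(G)\times V(H)$; distinct vertices $(g,h)$ and $(g',h')$ are adjacent iff ($g=g'$ and $hh'\in E(H)$), or ($gg'\in E(G)$ and $h=h'$), or ($gg'\in E(G)$ and $hh'\in E(H)$), or ($g\neq g'$, $h\neq h'$, $gg'\notin E(G)$ and $hh'\notin E(H)$). $K_{n,n}^{-M}(q_1,\dots,q_n,r_1,\dots,r_n)$ is the graph whose vertex set is a disjoint union of sets $X_1,\dots,X_n,Y_1,\dots,Y_n$ with $|X_i|=q_i$, $|Y_i|=r_i$, where each $X_i$ and each $Y_i$ induces a clique, every vertex of $X_i$ is adjacent to every vertex of $Y_j$ whenever $i\neq j$, and there are no other edges (when all $q_i=r_i=1$ this is $K_{n,n}$ minus a perfect matching, denoted $K_{n,n}^{-M}$). A vertex is universal if its closed neighborhood is the whole vertex set. Vertices $h,h'$ are twins if $N_H[h]=N_H[h']$ (an equivalence relation). A $\gamma_H$-pair is a set $\{h,h'\}$ of two distinct vertices with $N_H[h]\cap N_H[h']=\emptyset$ and $N_H[h]\cup N_H[h']=V(H)$. Let $T_1(H),\dots,T_{k(H)}(H)$ be the following partition of $V(H)$: each twin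 class of vertices not belonging to any $\gamma_H$-pair is one part, and for each $\gamma_H$-pair $\{h,h'\}$ the union of the twin class of $h$ and the twin class of $h'$ is one part; $k(H)$ is the number of parts and $t_j(H)=|T_j(H)|$. For a connected graph $X$, a vertex $z$ strongly resolves distinct vertices $x,y$ if $d_X(y,z)=d_X(y,x)+d_X(x,z)$ or $d_X(x,z)=d_X(x,y)+d_X(y,z)$; ${\rm dim}_s(X)$ is the minimum cardinality of a set $S\subseteq V(X)$ such that every pair of distinct vertices is strongly resolved by some vertex of $S$. *)

theory Defs
  imports Main
begin

definition sgraph :: "'a set \<Rightarrow> ('a \<Rightarrow> 'a \<Rightarrow> bool) \<Rightarrow> bool" where
  "sgraph V E \<longleftrightarrow> finite V \<and> (\<forall>x y. E x y \<longrightarrow> E y x) \<and> (\<forall>x. \<not> E x x)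
     \<and> (\<forall>x y. E x y \<longrightarrow> x \<in> V \<and> y \<in> V)"

definition closed_nbhd :: "'a set \<Rightarrow> ('a \<Rightarrow> 'a \<Rightarrow> bool) \<Rightarrow> 'a \<Rightarrow> 'a set" where
  "closed_nbhd V E h = {h} \<union> {h' \<in> V. E h h'}"

definition universal_vertex :: "'a set \<Rightarrow> ('a \<Rightarrow> 'a \<Rightarrow> bool) \<Rightarrow> 'a \<Rightarrow> bool" where
  "universal_vertex V E h \<longleftrightarrow> h \<in> V \<and> closed_nbhd V E h = V"

definition mod_prod_edge ::
  "('a \<Rightarrow> 'a \<Rightarrow> bool) \<Rightarrow> ('b \<Rightarrow> 'b \<Rightarrow> bool) \<Rightarrow> 'a \<times> 'b \<Rightarrow> 'a \<times> 'b \<Rightarrow> bool" where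
  "mod_prod_edge EG EH = (\<lambda>(g, h) (g', h'). (g, h) \<noteq> (g', h') \<and>
      ((g = g' \<and> EH h h') \<or> (EG g g' \<and> h = h') \<or> (EG g g' \<and> EH h h')
       \<or> (g \<noteq> g' \<and> h \<noteq> h' \<and> \<not> EG g g' \<and> \<not> EH h h')))"

definition mod_prod_vert :: "'a set \<Rightarrow> 'b set \<Rightarrow> ('a \<times> 'b) set" where
  "mod_prod_vert VG VH = VG \<times> VH"

text \<open>The graph K_{n,n}^{-M}(q_1..q_n, r_1..r_n). Vertex (False, i, a) with a < q i is in X_i,
  vertex (True, i, a) with a < r i is in Y_i, for 1 \<le> i \<le> n.\<close>

definition KnnM_vert :: "nat \<Rightarrow> (nat \<Rightarrow> nat) \<Rightarrow> (nat \<Rightarrow> nat) \<Rightarrow> (bool \<times> nat \<times> nat) set" where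
  "KnnM_vert n q r = {(False, i, a) | i a. i \<in> {1..n} \<and> a < q i}
                   \<union> {(True, i, a) | i a. i \<in> {1..n} \<and> a < r i}"

definition KnnM_edge :: "nat \<Rightarrow> (nat \<Rightarrow> nat) \<Rightarrow> (nat \<Rightarrow> nat) \<Rightarrow>
    (bool \<times> nat \<times> nat) \<Rightarrow> (bool \<times> nat \<times> nat) \<Rightarrow> bool" where
  "KnnM_edge n q r x y \<longleftrightarrow> x \<in> KnnM_vert n q r \<and> y \<in> KnnM_vert n q r \<and> x \<noteq> y \<and>
     ((fst x = fst y \<and> fst (snd x) = fst (snd y)) \<or>
      (fst x \<noteq> fst y \<and> fst (snd x) \<noteq> fst (snd y)))"

definition is_walk :: "'a set \<Rightarrow> ('a \<Rightarrow> 'a \<Rightarrow> bool) \<Rightarrow> 'a list \<Rightarrow> bool" where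
  "is_walk V E p \<longleftrightarrow> p \<noteq> [] \<and> set p \<subseteq> V \<and> (\<forall>i < length p - 1. E (p ! i) (p ! Suc i))"

definition connected_graph :: "'a set \<Rightarrow> ('a \<Rightarrow> 'a \<Rightarrow> bool) \<Rightarrow> bool" where
  "connected_graph V E \<longleftrightarrow> (\<forall>x\<in>V. \<forall>y\<in>V. \<exists>p. is_walk V E p \<and> hd p = x \<and> last p = y)"

definition gdist :: "'a set \<Rightarrow> ('a \<Rightarrow> 'a \<Rightarrow> bool) \<Rightarrow> 'a \<Rightarrow> 'a \<Rightarrow> nat" where
  "gdist V E x y = (LEAST k. \<exists>p. is_walk V E p \<and> hd p = x \<and> last p = y \<and> length p = Suc k)"

definition strongly_resolves :: "'a set \<Rightarrow> ('a \<Rightarrow> 'a \<Rightarrow> bool) \<Rightarrow> 'a \<Rightarrow> 'a \<Rightarrow> 'a \<Rightarrow> bool" where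
  "strongly_resolves V E z x y \<longleftrightarrow>
     gdist V E y z = gdist V E y x + gdist V E x z \<or> gdist V E x z = gdist V E x y + gdist V E y z"

definition strong_resolving_set :: "'a set \<Rightarrow> ('a \<Rightarrow> 'a \<Rightarrow> bool) \<Rightarrow> 'a set \<Rightarrow> bool" where
  "strong_resolving_set V E S \<longleftrightarrow> S \<subseteq> V \<and>
     (\<forall>x\<in>V. \<forall>y\<in>V. x \<noteq> y \<longrightarrow> (\<exists>z\<in>S. strongly_resolves V E z x y))"

definition strong_metric_dim :: "'a set \<Rightarrow> ('a \<Rightarrow> 'a \<Rightarrow> bool) \<Rightarrow> nat" where
  "strong_metric_dim V E = (LEAST k. \<exists>S. strong_resolving_set V E S \<and> card S = k)"

definition twin_class :: "'a set \<Rightarrow> ('a \<Rightarrow> 'a \<Rightarrow> bool) \<Rightarrow> 'a \<Rightarrow> 'a set" where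
  "twin_class V E h = {h' \<in> V. closed_nbhd V E h' = closed_nbhd V E h}"

definition gamma_pair :: "'a set \<Rightarrow> ('a \<Rightarrow> 'a \<Rightarrow> bool) \<Rightarrow> 'a \<Rightarrow> 'a \<Rightarrow> bool" where
  "gamma_pair V E h h' \<longleftrightarrow> h \<in> V \<and> h' \<in> V \<and> h \<noteq> h' \<and>
     closed_nbhd V E h \<inter> closed_nbhd V E h' = {} \<and>
     closed_nbhd V E h \<union> closed_nbhd V E h' = V"

definition T_part :: "'a set \<Rightarrow> ('a \<Rightarrow> 'a \<Rightarrow> bool) \<Rightarrow> 'a \<Rightarrow> 'a set" where
  "T_part V E h = twin_class V E h \<union> \<Union>{twin_class V E h' | h'. gamma_pair V E h h'}"

definition T_partition :: "'a set \<Rightarrow> ('a \<Rightarrow> 'a \<Rightarrow> bool) \<Rightarrow> 'a set set" where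
  "T_partition V E = T_part V E ` V"

definition k_H :: "'a set \<Rightarrow> ('a \<Rightarrow> 'a \<Rightarrow> bool) \<Rightarrow> nat" where
  "k_H V E = card (T_partition V E)"

end

theory Submission
  imports Defs
begin

text \<open>
  In the modular product of G = K_{n,n}^{-M}(q, r) with H, distinct vertices are adjacent exactly
  when their closed adjacencies in G and in H agree. Moving the G-coordinate between X_i and Y_i
  complements closed adjacency in G, so every closed neighbourhood N[x] of the product has a
  complementary one N[x*]. In such a graph (connected through some path x, a, b, x*, which n \<ge> 3
  provides) all distances are at most 3 and are determined by closed neighbourhoods. Hence if N[x]
  and N[y] are equal or complementary (distance 1 or 3), no third vertex strongly resolves x and y,
  while otherwise x* does. So dim_s is the number of vertices minus the number of classes of
  "equal or complementary closed neighbourhoods"; in the product these classes are given by an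
  index i and a part T_j(H), so there are n k(H) of them.
\<close>

section \<open>Walks and distances\<close>

lemma is_walk_singleton [simp]: "is_walk V E [x] \<longleftrightarrow> x \<in> V"
  unfolding is_walk_def by simp

lemma is_walk_Cons_Cons [simp]:
  "is_walk V E (x # y # p) \<longleftrightarrow> x \<in> V \<and> E x y \<and> is_walk V E (y # p)"
  unfolding is_walk_def by (auto simp: less_Suc_eq_0_disj)

lemma gdist_le_walk:
  assumes "is_walk V E p"
  shows "gdist V E (hd p) (last p) \<le> length p - 1"
  unfolding gdist_def using assms by (intro Least_le) (auto simp: is_walk_def)

lemma gdist_walk:
  assumes "is_walk V E p"
  obtains p' where "is_walk V E p'" "hd p' = hd p" "last p' = last p"
    "length p' = Suc (gdist V E (hd p) (last p))"
proof -
  have "\<exists>k p'. is_walk V E p' \<and> hd p' = hd p \<and> last p' = last p \<and> length p' = Suc k"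
    using assms by (intro exI[of _ "length p - 1"] exI[of _ p]) (auto simp: is_walk_def)
  then have "\<exists>p'. is_walk V E p' \<and> hd p' = hd p \<and> last p' = last p
               \<and> length p' = Suc (gdist V E (hd p) (last p))"
    unfolding gdist_def by (rule LeastI_ex)
  then show ?thesis using that by blast
qed

lemma walk_length_1: "is_walk V E p \<Longrightarrow> length p = 1 \<Longrightarrow> hd p = last p"
  by (auto simp: length_Suc_conv)

lemma walk_length_2: "is_walk V E p \<Longrightarrow> length p = 2 \<Longrightarrow> E (hd p) (last p)"
  by (auto simp: length_Suc_conv numeral_eq_Suc)

lemma walk_length_3:
  "is_walk V E p \<Longrightarrow> length p = 3 \<Longrightarrow> \<exists>w\<in>V. E (hd p) w \<and> E w (last p)"
  by (auto simp: length_Suc_conv numeral_eq_Suc)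

section \<open>Closed neighbourhoods and the partition \<open>T(H)\<close>\<close>

definition closed_adj :: "('a \<Rightarrow> 'a \<Rightarrow> bool) \<Rightarrow> 'a \<Rightarrow> 'a \<Rightarrow> bool" where
  "closed_adj E x y \<longleftrightarrow> x = y \<or> E x y"

lemma closed_adj_sym: "sgraph V E \<Longrightarrow> closed_adj E x y \<longleftrightarrow> closed_adj E y x"
  unfolding sgraph_def closed_adj_def by blast

definition twin_antitwin_rel :: "'a set \<Rightarrow> ('a \<Rightarrow> 'a \<Rightarrow> bool) \<Rightarrow> 'a rel" where
  "twin_antitwin_rel V E = {(h, h'). h \<in> V \<and> h' \<in> V \<and>
     (closed_nbhd V E h' = closed_nbhd V E h \<or> closed_nbhd V E h' = V - closed_nbhd V E h)}"

lemma closed_nbhd_subset: "h \<in> V \<Longrightarrow> closed_nbhd V E h \<subseteq> V"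
  unfolding closed_nbhd_def by auto

lemma self_in_closed_nbhd: "h \<in> closed_nbhd V E h"
  unfolding closed_nbhd_def by auto

lemma closed_adj_iff_in_closed_nbhd: "h' \<in> V \<Longrightarrow> closed_adj E h h' \<longleftrightarrow> h' \<in> closed_nbhd V E h"
  unfolding closed_adj_def closed_nbhd_def by auto

lemma equiv_twin_antitwin_rel: "equiv V (twin_antitwin_rel V E)"
proof (rule equivI)
  show "refl_on V (twin_antitwin_rel V E)"
    unfolding twin_antitwin_rel_def refl_on_def by auto
  show "sym (twin_antitwin_rel V E)"
  proof (rule symI)
    fix h h' assume "(h, h') \<in> twin_antitwin_rel V E"
    then show "(h', h) \<in> twin_antitwin_rel V E"
      using closed_nbhd_subset[of h V E] closed_nbhd_subset[of h' V E]
      unfolding twin_antitwin_rel_def by (auto simp: Diff_Diff_Int Int_absorb1)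
  qed
  show "trans (twin_antitwin_rel V E)"
  proof (rule transI)
    fix h h' h'' assume "(h, h') \<in> twin_antitwin_rel V E" "(h', h'') \<in> twin_antitwin_rel V E"
    then show "(h, h'') \<in> twin_antitwin_rel V E"
      using closed_nbhd_subset[of h V E]
      unfolding twin_antitwin_rel_def by (auto simp: Diff_Diff_Int Int_absorb1)
  qed
qed (auto simp: twin_antitwin_rel_def)

lemma T_part_eq_Image:
  assumes "h \<in> V"
  shows "T_part V E h = twin_antitwin_rel V E `` {h}"
proof -
  have gamma: "gamma_pair V E h h' \<longleftrightarrow> h' \<in> V \<and> closed_nbhd V E h' = V - closed_nbhd V E h" for h'
    using assms closed_nbhd_subset[of _ V E] self_in_closed_nbhd[of h V E]
      self_in_closed_nbhd[of h' V E]
    unfolding gamma_pair_def by blast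
  show ?thesis
    unfolding T_part_def twin_class_def twin_antitwin_rel_def gamma using assms by auto
qed

lemma T_partition_eq_quotient: "T_partition V E = V // twin_antitwin_rel V E"
  unfolding T_partition_def quotient_def using T_part_eq_Image by fastforce

lemma sum_card_T_partition:
  assumes "finite V"
  shows "(\<Sum>T\<in>T_partition V E. card T) = card V"
proof -
  have eqv: "equiv V (twin_antitwin_rel V E)" by (rule equiv_twin_antitwin_rel)
  have "card (\<Union>(V // twin_antitwin_rel V E)) = (\<Sum>T\<in>V // twin_antitwin_rel V E. card T)"
  proof (rule card_Union_disjoint)
    show "pairwise disjnt (V // twin_antitwin_rel V E)"
      using quotient_disj[OF eqv] unfolding pairwise_def disjnt_def by blast
    show "finite T" if "T \<in> V // twin_antitwin_rel V E" for T
      using finite_equiv_class[OF assms equiv_type[OF eqv] that] .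
  qed
  then show ?thesis
    unfolding T_partition_eq_quotient Union_quotient[OF eqv] by simp
qed

lemma eq_or_complement_iff:
  assumes "A \<subseteq> V" "B \<subseteq> V"
  shows "B = A \<or> B = V - A \<longleftrightarrow> (\<exists>c. \<forall>w\<in>V. w \<in> B \<longleftrightarrow> (w \<in> A \<longleftrightarrow> c))"
proof
  assume "B = A \<or> B = V - A"
  then show "\<exists>c. \<forall>w\<in>V. w \<in> B \<longleftrightarrow> (w \<in> A \<longleftrightarrow> c)" by blast
next
  assume "\<exists>c. \<forall>w\<in>V. w \<in> B \<longleftrightarrow> (w \<in> A \<longleftrightarrow> c)"
  then obtain c where "\<forall>w\<in>V. w \<in> B \<longleftrightarrow> (w \<in> A \<longleftrightarrow> c)" by blast
  then show "B = A \<or> B = V - A" using assms by (cases c) auto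
qed

lemma twin_antitwin_rel_iff:
  "(h, h') \<in> twin_antitwin_rel V E \<longleftrightarrow>
     h \<in> V \<and> h' \<in> V \<and> (\<exists>c. \<forall>w\<in>V. closed_adj E h' w \<longleftrightarrow> (closed_adj E h w \<longleftrightarrow> c))"
proof -
  have "closed_nbhd V E h' = closed_nbhd V E h \<or> closed_nbhd V E h' = V - closed_nbhd V E h \<longleftrightarrow>
        (\<exists>c. \<forall>w\<in>V. closed_adj E h' w \<longleftrightarrow> (closed_adj E h w \<longleftrightarrow> c))"
    if "h \<in> V" "h' \<in> V"
    using eq_or_complement_iff[OF closed_nbhd_subset[OF that(1)] closed_nbhd_subset[OF that(2)]]
      closed_adj_iff_in_closed_nbhd[of _ V E] by simp
  then show ?thesis unfolding twin_antitwin_rel_def by auto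
qed

section \<open>Graphs with complemented closed neighbourhoods\<close>

locale nbhd_complemented_graph =
  fixes V :: "'a set" and E :: "'a \<Rightarrow> 'a \<Rightarrow> bool"
    and C :: "'a \<Rightarrow> 'a \<Rightarrow> bool" and comp :: "'a \<Rightarrow> 'a"
  assumes C_refl: "x \<in> V \<Longrightarrow> C x x"
    and C_sym: "x \<in> V \<Longrightarrow> y \<in> V \<Longrightarrow> C x y \<longleftrightarrow> C y x"
    and E_iff: "x \<in> V \<Longrightarrow> y \<in> V \<Longrightarrow> E x y \<longleftrightarrow> x \<noteq> y \<and> C x y"
    and comp_in: "x \<in> V \<Longrightarrow> comp x \<in> V"
    and C_comp: "x \<in> V \<Longrightarrow> w \<in> V \<Longrightarrow> C (comp x) w \<longleftrightarrow> \<not> C x w"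
    and comp_bridge: "x \<in> V \<Longrightarrow> \<exists>a\<in>V. \<exists>b\<in>V. C x a \<and> C a b \<and> C b (comp x)"
begin

definition twin_or_antitwin :: "'a \<Rightarrow> 'a \<Rightarrow> bool" where
  "twin_or_antitwin x y \<longleftrightarrow> (\<forall>w\<in>V. C y w \<longleftrightarrow> C x w) \<or> (\<forall>w\<in>V. C y w \<longleftrightarrow> \<not> C x w)"

lemma twin_or_antitwin_iff_ex:
  "twin_or_antitwin x y \<longleftrightarrow> (\<exists>c. \<forall>w\<in>V. C y w \<longleftrightarrow> (C x w \<longleftrightarrow> c))"
  unfolding twin_or_antitwin_def by (metis (full_types))

lemma C_comp_right: "x \<in> V \<Longrightarrow> w \<in> V \<Longrightarrow> C w (comp x) \<longleftrightarrow> \<not> C w x"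
  using C_comp C_sym comp_in by metis

lemma twin_or_antitwin_comp: "x \<in> V \<Longrightarrow> twin_or_antitwin x (comp x)"
  unfolding twin_or_antitwin_def using C_comp by blast

lemma comp_neq: "x \<in> V \<Longrightarrow> comp x \<noteq> x"
  using C_comp[of x x] C_refl[of x] by auto

lemma no_common_nbr_imp_antitwin:
  assumes x: "x \<in> V" and y: "y \<in> V" and none: "\<not> (\<exists>w\<in>V. C x w \<and> C w y)"
  shows "\<forall>w\<in>V. C y w \<longleftrightarrow> \<not> C x w"
proof
  fix w assume w: "w \<in> V"
  show "C y w \<longleftrightarrow> \<not> C x w"
  proof
    assume "C y w" then show "\<not> C x w" using none w y C_sym by blast
  next
    assume "\<not> C x w"
    \<comment> \<open>otherwise \<open>comp w\<close> would be a common neighbour\<close>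
    then show "C y w" using none w x y comp_in C_comp_right C_sym by metis
  qed
qed

lemma short_walk:
  assumes x: "x \<in> V" and y: "y \<in> V"
  obtains p where "is_walk V E p" "hd p = x" "last p = y"
    "length p = Suc (if x = y then 0 else if C x y then 1
                     else if \<exists>w\<in>V. C x w \<and> C w y then 2 else 3)"
proof -
  consider "x = y" | "x \<noteq> y" "C x y" | w where "x \<noteq> y" "\<not> C x y" "w \<in> V" "C x w" "C w y"
    | "x \<noteq> y" "\<not> C x y" "\<not> (\<exists>w\<in>V. C x w \<and> C w y)"
    by blast
  then show ?thesis
  proof cases
    case 1 then show ?thesis using that[of "[x]"] x by simp
  next
    case 2 then show ?thesis using that[of "[x, y]"] x y E_iff by simp
  next
    case (3 w)
    then have "E x w" "E w y" using x y E_iff by auto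
    moreover have "\<exists>w\<in>V. C x w \<and> C w y" using 3 by blast
    ultimately show ?thesis using 3 that[of "[x, w, y]"] x y by (simp add: numeral_eq_Suc)
  next
    case 4
    then have anti: "\<forall>w\<in>V. C y w \<longleftrightarrow> \<not> C x w"
      using no_common_nbr_imp_antitwin x y by blast
    obtain a b where ab: "a \<in> V" "b \<in> V" "C x a" "C a b" "C b (comp x)"
      using comp_bridge x by blast
    \<comment> \<open>\<open>y\<close> and \<open>comp x\<close> have the same closed neighbourhood\<close>
    have "C b y" using ab anti x y C_comp_right C_sym by metis
    moreover have "x \<noteq> a" "a \<noteq> b" "b \<noteq> y"
      using ab 4 x C_comp_right C_sym by metis+
    ultimately have "E x a" "E a b" "E b y" using ab x y E_iff by auto
    then show ?thesis using 4 that[of "[x, a, b, y]"] x y ab by (auto simp: numeral_eq_Suc)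
  qed
qed

lemma gdist_eq:
  assumes x: "x \<in> V" and y: "y \<in> V"
  shows "gdist V E x y = (if x = y then 0 else if C x y then 1
                          else if \<exists>w\<in>V. C x w \<and> C w y then 2 else 3)"
    (is "_ = ?d")
proof (rule antisym)
  obtain p where p: "is_walk V E p" "hd p = x" "last p = y" "length p = Suc ?d"
    using short_walk[OF x y] .
  show "gdist V E x y \<le> ?d" using gdist_le_walk[OF p(1)] p by simp
  obtain p' where p': "is_walk V E p'" "hd p' = x" "last p' = y"
    "length p' = Suc (gdist V E x y)"
    using gdist_walk[OF p(1)] p by metis
  show "?d \<le> gdist V E x y"
  proof (rule ccontr)
    assume "\<not> ?d \<le> gdist V E x y"
    then have "gdist V E x y < 3" by (simp split: if_splits)
    then consider "gdist V E x y = 0" | "gdist V E x y = 1" | "gdist V E x y = 2"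
      by linarith
    then show False
    proof cases
      case 1 then show False using walk_length_1[OF p'(1)] p' \<open>\<not> ?d \<le> _\<close> by simp
    next
      case 2 then show False using walk_length_2[OF p'(1)] p' \<open>\<not> ?d \<le> _\<close> E_iff x y by simp
    next
      case 3 then show False using walk_length_3[OF p'(1)] p' \<open>\<not> ?d \<le> _\<close> E_iff x y
        by (auto split: if_splits)
    qed
  qed
qed

lemma strongly_resolves_left: "x \<in> V \<Longrightarrow> y \<in> V \<Longrightarrow> strongly_resolves V E x x y"
  unfolding strongly_resolves_def using gdist_eq by simp

lemma strongly_resolves_right: "x \<in> V \<Longrightarrow> y \<in> V \<Longrightarrow> strongly_resolves V E y x y"
  unfolding strongly_resolves_def using gdist_eq by simp

lemma twin_or_antitwin_unresolved:
  assumes x: "x \<in> V" and y: "y \<in> V" and z: "z \<in> V"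
    and "x \<noteq> y" "z \<noteq> x" "z \<noteq> y" and xy: "twin_or_antitwin x y"
  shows "\<not> strongly_resolves V E z x y"
  using xy unfolding twin_or_antitwin_def
proof
  assume twin: "\<forall>w\<in>V. C y w \<longleftrightarrow> C x w"
  then have "C x y" "C y x" using x y C_refl C_sym by auto
  moreover have "gdist V E x z = gdist V E y z"
    using twin x y z gdist_eq \<open>z \<noteq> x\<close> \<open>z \<noteq> y\<close> by simp
  ultimately show ?thesis
    unfolding strongly_resolves_def using gdist_eq x y z \<open>x \<noteq> y\<close> by auto
next
  assume anti: "\<forall>w\<in>V. C y w \<longleftrightarrow> \<not> C x w"
  then have "\<not> C x y" "\<not> C y x" "\<not> (\<exists>w\<in>V. C x w \<and> C w y)" "\<not> (\<exists>w\<in>V. C y w \<and> C w x)"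
    using x y C_refl C_sym by auto
  then have "gdist V E x y = 3" "gdist V E y x = 3"
    using x y gdist_eq \<open>x \<noteq> y\<close> by auto
  moreover have "gdist V E x z \<in> {1..3}" "gdist V E y z \<in> {1..3}"
    using gdist_eq x y z \<open>z \<noteq> x\<close> \<open>z \<noteq> y\<close> by auto
  ultimately show ?thesis unfolding strongly_resolves_def by auto
qed

lemma private_nbr_if_not_twin:
  assumes "x \<in> V" "y \<in> V" "\<not> (\<forall>w\<in>V. C y w \<longleftrightarrow> C x w)"
  shows "\<exists>w\<in>V. C y w \<and> \<not> C x w"
  using assms comp_in C_comp_right by metis

lemma common_nbr_if_not_antitwin:
  assumes "x \<in> V" "y \<in> V" "\<not> (\<forall>w\<in>V. C y w \<longleftrightarrow> \<not> C x w)"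
  shows "\<exists>w\<in>V. C y w \<and> C x w"
  using assms comp_in C_comp_right by metis

lemma comp_strongly_resolves:
  assumes x: "x \<in> V" and y: "y \<in> V" and xy: "\<not> twin_or_antitwin x y"
  shows "strongly_resolves V E (comp x) x y"
proof -
  have z: "comp x \<in> V" using comp_in x .
  have "\<not> C x (comp x)" "\<not> (\<exists>w\<in>V. C x w \<and> C w (comp x))"
    using x C_refl C_sym C_comp_right by auto
  then have dxz: "gdist V E x (comp x) = 3" using gdist_eq[OF x z] comp_neq[OF x] by auto
  have "y \<noteq> x" "y \<noteq> comp x"
    using xy twin_or_antitwin_comp[OF x] unfolding twin_or_antitwin_def by auto
  show ?thesis
  proof (cases "C x y")
    case True
    have "\<not> C y (comp x)" using True x y C_comp_right C_sym by blast
    moreover obtain w where "w \<in> V" "C y w" "\<not> C x w"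
      using private_nbr_if_not_twin[OF x y] xy unfolding twin_or_antitwin_def by blast
    ultimately have "gdist V E y (comp x) = 2"
      using gdist_eq[OF y z] \<open>y \<noteq> comp x\<close> x C_comp_right C_sym by auto
    moreover have "gdist V E x y = 1" using gdist_eq[OF x y] True \<open>y \<noteq> x\<close> by auto
    ultimately show ?thesis unfolding strongly_resolves_def using dxz by simp
  next
    case False
    have "C y (comp x)" using False x y C_comp_right C_sym by blast
    then have "gdist V E y (comp x) = 1" using gdist_eq[OF y z] \<open>y \<noteq> comp x\<close> by auto
    moreover obtain w where "w \<in> V" "C y w" "C x w"
      using common_nbr_if_not_antitwin[OF x y] xy unfolding twin_or_antitwin_def by blast
    then have "gdist V E x y = 2"
      using gdist_eq[OF x y] False \<open>y \<noteq> x\<close> y C_sym by auto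
    ultimately show ?thesis unfolding strongly_resolves_def using dxz by simp
  qed
qed

lemma twin_or_antitwin_outside_resolving_set:
  assumes S: "strong_resolving_set V E S" and x: "x \<in> V - S" and y: "y \<in> V - S"
    and xy: "twin_or_antitwin x y"
  shows "x = y"
proof (rule ccontr)
  assume "x \<noteq> y"
  then obtain z where "z \<in> S" "strongly_resolves V E z x y"
    using S x y unfolding strong_resolving_set_def by blast
  moreover have "z \<in> V" using \<open>z \<in> S\<close> S unfolding strong_resolving_set_def by blast
  ultimately show False
    using twin_or_antitwin_unresolved[OF _ _ _ \<open>x \<noteq> y\<close> _ _ xy] x y by blast
qed

lemma strong_resolving_set_Diff:
  assumes R: "R \<subseteq> V" and distinct: "\<forall>x\<in>R. \<forall>y\<in>R. twin_or_antitwin x y \<longrightarrow> x = y"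
  shows "strong_resolving_set V E (V - R)"
  unfolding strong_resolving_set_def
proof (intro conjI ballI impI)
  fix x y assume x: "x \<in> V" and y: "y \<in> V" and "x \<noteq> y"
  consider "x \<notin> R" | "y \<notin> R" | "x \<in> R" "y \<in> R" by blast
  then show "\<exists>z\<in>V - R. strongly_resolves V E z x y"
  proof cases
    case 1 then show ?thesis using strongly_resolves_left x y by blast
  next
    case 2 then show ?thesis using strongly_resolves_right x y by blast
  next
    case 3
    \<comment> \<open>\<open>comp x\<close> lies in the class of \<open>x\<close>, hence outside \<open>R\<close>\<close>
    have "comp x \<notin> R"
      using distinct 3 twin_or_antitwin_comp[OF x] comp_neq[OF x] by metis
    moreover have "\<not> twin_or_antitwin x y" using distinct 3 \<open>x \<noteq> y\<close> by blast
    ultimately show ?thesis using comp_strongly_resolves[OF x y] comp_in[OF x] by blast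
  qed
qed auto

theorem strong_metric_dim_eq:
  assumes fin: "finite V"
    and f: "\<forall>x\<in>V. \<forall>y\<in>V. f x = f y \<longleftrightarrow> twin_or_antitwin x y"
  shows "strong_metric_dim V E = card V - card (f ` V)"
  unfolding strong_metric_dim_def
proof (rule Least_equality)
  define R where "R = inv_into V f ` f ` V"
  have R: "R \<subseteq> V" unfolding R_def by (auto intro: inv_into_into)
  have bij: "bij_betw (inv_into V f) (f ` V) R"
    unfolding R_def by (auto simp: bij_betw_def intro: inj_on_inv_into)
  have "\<forall>x\<in>R. \<forall>y\<in>R. twin_or_antitwin x y \<longrightarrow> x = y"
  proof (intro ballI impI)
    fix x y assume "x \<in> R" "y \<in> R" "twin_or_antitwin x y"
    then have "f x = f y" using f R by blast
    then show "x = y" using \<open>x \<in> R\<close> \<open>y \<in> R\<close> unfolding R_def by (auto simp: f_inv_into_f)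
  qed
  then have "strong_resolving_set V E (V - R)"
    using strong_resolving_set_Diff[OF R] by blast
  moreover have "card (V - R) = card V - card (f ` V)"
    using card_Diff_subset[OF finite_subset[OF R fin] R] bij_betw_same_card[OF bij] by simp
  ultimately show "\<exists>S. strong_resolving_set V E S \<and> card S = card V - card (f ` V)"
    by blast
next
  fix k assume "\<exists>S. strong_resolving_set V E S \<and> card S = k"
  then obtain S where S: "strong_resolving_set V E S" "card S = k" by blast
  have SV: "S \<subseteq> V" using S(1) unfolding strong_resolving_set_def by blast
  have "inj_on f (V - S)"
    using twin_or_antitwin_outside_resolving_set[OF S(1)] f by (auto intro: inj_onI)
  then have "card (V - S) \<le> card (f ` V)"
    using card_inj_on_le[of f "V - S" "f ` V"] fin by blast
  then show "card V - card (f ` V) \<le> k"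
    using card_Diff_subset[OF finite_subset[OF SV fin] SV] S(2) by linarith
qed

end

section \<open>The modular product with \<open>K\<^sub>n\<^sub>,\<^sub>n\<^sup>-\<^sup>M\<close>\<close>

lemma mod_prod_edge_iff:
  "mod_prod_edge EG EH (g, h) (g', h') \<longleftrightarrow>
     (g, h) \<noteq> (g', h') \<and> (closed_adj EG g g' \<longleftrightarrow> closed_adj EH h h')"
  unfolding mod_prod_edge_def closed_adj_def by auto

lemma exists_other_index: "n \<ge> 3 \<Longrightarrow> \<exists>k\<in>{1..n}. k \<noteq> i \<and> k \<noteq> (j::nat)"
proof -
  assume "n \<ge> 3"
  moreover have "\<exists>k\<in>{1, 2, 3}. k \<noteq> i \<and> k \<noteq> j" by auto
  ultimately show ?thesis by force
qed

lemma mem_KnnM_vert: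
  "(s, i, a) \<in> KnnM_vert n q r \<longleftrightarrow> i \<in> {1..n} \<and> a < (if s then r i else q i)"
  unfolding KnnM_vert_def by auto

lemma KnnM_closed_adj_iff:
  assumes "g \<in> KnnM_vert n q r" "g' \<in> KnnM_vert n q r"
  shows "closed_adj (KnnM_edge n q r) g g' \<longleftrightarrow> ((fst g = fst g') \<longleftrightarrow> (fst (snd g) = fst (snd g')))"
  using assms unfolding closed_adj_def KnnM_edge_def by auto

lemma KnnM_vert_eq_images:
  "KnnM_vert n q r = (\<lambda>(i, a). (False, i, a)) ` (SIGMA i:{1..n}. {..<q i})
                   \<union> (\<lambda>(i, a). (True, i, a)) ` (SIGMA i:{1..n}. {..<r i})"
  unfolding KnnM_vert_def by auto

lemma finite_KnnM_vert: "finite (KnnM_vert n q r)"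
  unfolding KnnM_vert_eq_images by auto

lemma card_KnnM_vert: "card (KnnM_vert n q r) = (\<Sum>i=1..n. q i + r i)"
proof -
  have "card ((\<lambda>(i, a). (False, i, a)) ` (SIGMA i:{1..n}. {..<q i})) = (\<Sum>i=1..n. q i)"
    by (subst card_image) (auto simp: inj_on_def)
  moreover have "card ((\<lambda>(i, a). (True, i, a)) ` (SIGMA i:{1..n}. {..<r i})) = (\<Sum>i=1..n. r i)"
    by (subst card_image) (auto simp: inj_on_def)
  ultimately show ?thesis
    unfolding KnnM_vert_eq_images by (subst card_Un_disjoint) (auto simp: sum.distrib)
qed

locale KnnM_mod_prod =
  fixes n :: nat and q r :: "nat \<Rightarrow> nat" and VH :: "'b set" and EH :: "'b \<Rightarrow> 'b \<Rightarrow> bool"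
  assumes n_ge_3: "n \<ge> 3" and pos: "\<forall>i\<in>{1..n}. q i > 0 \<and> r i > 0" and sgraph: "sgraph VH EH"
begin

abbreviation "V \<equiv> mod_prod_vert (KnnM_vert n q r) VH"
abbreviation "E \<equiv> mod_prod_edge (KnnM_edge n q r) EH"

fun prod_closed_adj :: "(bool \<times> nat \<times> nat) \<times> 'b \<Rightarrow> (bool \<times> nat \<times> nat) \<times> 'b \<Rightarrow> bool" where
  "prod_closed_adj ((s, i, _), h) ((s', i', _), h') \<longleftrightarrow> ((s = s') = (i = i')) = closed_adj EH h h'"

fun flip_side :: "(bool \<times> nat \<times> nat) \<times> 'b \<Rightarrow> (bool \<times> nat \<times> nat) \<times> 'b" where
  "flip_side ((s, i, _), h) = ((\<not> s, i, 0), h)"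

lemma mem_V: "((s, i, a), h) \<in> V \<longleftrightarrow> i \<in> {1..n} \<and> a < (if s then r i else q i) \<and> h \<in> VH"
  unfolding mod_prod_vert_def by (simp add: mem_KnnM_vert)

lemma finite_V: "finite V"
  using sgraph finite_KnnM_vert unfolding sgraph_def mod_prod_vert_def by simp

lemma card_V: "card V = (\<Sum>i=1..n. q i + r i) * card VH"
  unfolding mod_prod_vert_def by (simp add: card_cartesian_product card_KnnM_vert)

sublocale nbhd_complemented_graph V E prod_closed_adj flip_side
proof
  fix x y assume x: "x \<in> V" and y: "y \<in> V"
  obtain s i a h where [simp]: "x = ((s, i, a), h)" by (metis prod.exhaust)
  obtain s' i' a' h' where [simp]: "y = ((s', i', a'), h')" by (metis prod.exhaust)
  show "prod_closed_adj x x" by (simp add: closed_adj_def)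
  show "prod_closed_adj x y \<longleftrightarrow> prod_closed_adj y x"
    using closed_adj_sym[OF sgraph, of h h'] by auto
  show "E x y \<longleftrightarrow> x \<noteq> y \<and> prod_closed_adj x y"
    using x y by (simp add: mod_prod_edge_iff KnnM_closed_adj_iff mod_prod_vert_def)
  show "flip_side x \<in> V" using x pos by (auto simp: mem_V)
  show "prod_closed_adj (flip_side x) y \<longleftrightarrow> \<not> prod_closed_adj x y" by auto
next
  fix x assume x: "x \<in> V"
  obtain s i a h where [simp]: "x = ((s, i, a), h)" by (metis prod.exhaust)
  have i: "i \<in> {1..n}" and h: "h \<in> VH" using x by (auto simp: mem_V)
  obtain j k where "j \<in> {1..n}" "k \<in> {1..n}" "j \<noteq> i" "k \<noteq> i" "k \<noteq> j"
    using exists_other_index[OF n_ge_3, of i i] exists_other_index[OF n_ge_3, of i] by metis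
  then show "\<exists>a\<in>V. \<exists>b\<in>V. prod_closed_adj x a \<and> prod_closed_adj a b \<and> prod_closed_adj b (flip_side x)"
    using h pos by (intro bexI[of _ "((\<not> s, j, 0), h)"] bexI[of _ "((s, k, 0), h)"])
      (auto simp: mem_V closed_adj_def)
qed

lemma twin_or_antitwin_iff:
  assumes x: "((s, i, a), h) \<in> V" and y: "((s', i', a'), h') \<in> V"
  shows "twin_or_antitwin ((s, i, a), h) ((s', i', a'), h') \<longleftrightarrow>
           i = i' \<and> (h, h') \<in> twin_antitwin_rel VH EH"
    (is "twin_or_antitwin ?x ?y \<longleftrightarrow> _")
proof
  assume "twin_or_antitwin ?x ?y"
  then obtain c where c: "\<forall>w\<in>V. prod_closed_adj ?y w \<longleftrightarrow> (prod_closed_adj ?x w \<longleftrightarrow> c)"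
    unfolding twin_or_antitwin_iff_ex by blast
  have h: "h \<in> VH" "h' \<in> VH" and i: "i \<in> {1..n}" using x y by (auto simp: mem_V)
  have "i = i'"
  proof (rule ccontr)
    assume "i \<noteq> i'"
    obtain k where k: "k \<in> {1..n}" "k \<noteq> i" "k \<noteq> i'" using exists_other_index[OF n_ge_3] by blast
    have w: "((s, k, 0), h) \<in> V" using k pos h by (simp add: mem_V)
    show False
      using c[rule_format, OF w] c[rule_format, OF x] \<open>i \<noteq> i'\<close> k
      by (auto simp: closed_adj_def)
  qed
  moreover have "\<forall>w\<in>VH. closed_adj EH h' w \<longleftrightarrow> (closed_adj EH h w \<longleftrightarrow> (c \<longleftrightarrow> s = s'))"
  proof
    fix w assume "w \<in> VH"
    then have "((s, i, 0), w) \<in> V" using pos i by (simp add: mem_V)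
    then show "closed_adj EH h' w \<longleftrightarrow> (closed_adj EH h w \<longleftrightarrow> (c \<longleftrightarrow> s = s'))"
      using c \<open>i = i'\<close> by auto
  qed
  ultimately show "i = i' \<and> (h, h') \<in> twin_antitwin_rel VH EH"
    using h by (auto simp: twin_antitwin_rel_iff)
next
  assume "i = i' \<and> (h, h') \<in> twin_antitwin_rel VH EH"
  then obtain c where "i = i'" and c: "\<forall>w\<in>VH. closed_adj EH h' w \<longleftrightarrow> (closed_adj EH h w \<longleftrightarrow> c)"
    by (auto simp: twin_antitwin_rel_iff)
  have "prod_closed_adj ?y w \<longleftrightarrow> (prod_closed_adj ?x w \<longleftrightarrow> (c \<longleftrightarrow> s = s'))" if "w \<in> V" for w
  proof -
    obtain s0 i0 a0 h0 where [simp]: "w = ((s0, i0, a0), h0)" by (metis prod.exhaust)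
    have "h0 \<in> VH" using that by (simp add: mem_V)
    then show ?thesis using c \<open>i = i'\<close> by auto
  qed
  then show "twin_or_antitwin ?x ?y" unfolding twin_or_antitwin_iff_ex by blast
qed

fun index_and_part :: "(bool \<times> nat \<times> nat) \<times> 'b \<Rightarrow> nat \<times> 'b set" where
  "index_and_part ((_, i, _), h) = (i, T_part VH EH h)"

lemma index_and_part_eq_iff:
  assumes "x \<in> V" "y \<in> V"
  shows "index_and_part x = index_and_part y \<longleftrightarrow> twin_or_antitwin x y"
proof -
  obtain s i a h where x: "x = ((s, i, a), h)" by (metis prod.exhaust)
  obtain s' i' a' h' where y: "y = ((s', i', a'), h')" by (metis prod.exhaust)
  have "h \<in> VH" "h' \<in> VH" using assms by (simp_all add: x y mem_V)
  then show ?thesis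
    using assms twin_or_antitwin_iff
    by (simp add: x y T_part_eq_Image eq_equiv_class_iff[OF equiv_twin_antitwin_rel])
qed

lemma index_and_part_image: "index_and_part ` V = {1..n} \<times> T_partition VH EH"
proof
  show "index_and_part ` V \<subseteq> {1..n} \<times> T_partition VH EH"
    by (auto simp: mem_V T_partition_def)
  show "{1..n} \<times> T_partition VH EH \<subseteq> index_and_part ` V"
  proof
    fix p assume "p \<in> {1..n} \<times> T_partition VH EH"
    then obtain i h where "p = (i, T_part VH EH h)" "i \<in> {1..n}" "h \<in> VH"
      unfolding T_partition_def by blast
    then show "p \<in> index_and_part ` V"
      using pos by (intro image_eqI[of _ _ "((False, i, 0), h)"]) (auto simp: mem_V)
  qed
qed

lemma strong_metric_dim_eq_KnnM: "strong_metric_dim V E = card V - n * k_H VH EH"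
proof -
  have "strong_metric_dim V E = card V - card (index_and_part ` V)"
    using strong_metric_dim_eq[OF finite_V] index_and_part_eq_iff by blast
  then show ?thesis
    unfolding index_and_part_image k_H_def by (simp add: card_cartesian_product)
qed

lemma n_k_H_le_card_V: "n * k_H VH EH \<le> card V"
  using card_image_le[OF finite_V, of index_and_part]
  unfolding index_and_part_image k_H_def by (simp add: card_cartesian_product)

end

theorem mainTheorem11:
  fixes n :: nat and q r :: "nat \<Rightarrow> nat"
    and VH :: "'b set" and EH :: "'b \<Rightarrow> 'b \<Rightarrow> bool"
  assumes "n \<ge> 3"
    and "\<forall>i\<in>{1..n}. q i > 0 \<and> r i > 0"
    and "sgraph VH EH"
    and "\<not> (\<exists>h. universal_vertex VH EH h)"
  shows "int (strong_metric_dim (mod_prod_vert (KnnM_vert n q r) VH)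
                                (mod_prod_edge (KnnM_edge n q r) EH))
         = (\<Sum>i=1..n. int (q i + r i) * (\<Sum>T\<in>T_partition VH EH. int (card T)))
           - int n * int (k_H VH EH)"
proof -
  interpret KnnM_mod_prod n q r VH EH
    using assms(1-3) by unfold_locales
  have "(\<Sum>T\<in>T_partition VH EH. int (card T)) = int (card VH)"
    using sum_card_T_partition[of VH EH] sgraph unfolding sgraph_def by (metis of_nat_sum)
  then have "(\<Sum>i=1..n. int (q i + r i) * (\<Sum>T\<in>T_partition VH EH. int (card T))) = int (card V)"
    by (simp add: card_V sum_distrib_right[symmetric])
  then show ?thesis
    using strong_metric_dim_eq_KnnM n_k_H_le_card_V by (simp add: of_nat_diff)
qed

end
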